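(* For all integers $n\geq 2$ and $m\geq 2$: (i) $\mathrm{mbt}(K_{2n}\Box C_{2m})=\Delta(K_{2n}\Box C_{2m})+1=2n+2$; (ii) $\mathrm{mbt}(K_{2n+1}\Box C_{2m})=\Delta(K_{2n+1}\Box C_{2m})+1=2n+3$.
   Context: A book embedding of a graph $G$ consists of a linear ordering of $V(G)$ (the vertices placed on the spine) together with an assignment of each edge to one of a set of pages such that no two edges on the same page cross, i.e. there are no two edges $uv$, $xy$ on the same page with $u<x<v<y$ in the ordering. A book embedding is matching if on every page each vertex is incident with at most one edge of that page. The matching book thickness $\mathrm{mbt}(G)$ is the minimum number of pages over all matching book embeddings of $G$. $\Delta(G)$ denotes the maximum degree of $G$. $K_r$ is the complete graph on $r$ vertices, $C_s$ the cycle on $s$ vertices. The Cartesian product $G\Box B$ has vertex set $V(G)\times V(B)$, with $(u_1,v_1)$ adjacent to $(u_2,v_2)$ iff either $u_1=u_2$ and $v_1v_2\in E(B)$, or $v_1=v_2$ and $u_1u_2\in E(G)$. *)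

theory Defs
  imports Main
begin

type_synonym 'a graph = "'a set \<times> 'a set set"

definition verts :: "'a graph \<Rightarrow> 'a set" where "verts G = fst G"
definition edges :: "'a graph \<Rightarrow> 'a set set" where "edges G = snd G"

definition degree :: "'a graph \<Rightarrow> 'a \<Rightarrow> nat" where
  "degree G v = card {e \<in> edges G. v \<in> e}"

definition max_degree :: "'a graph \<Rightarrow> nat" where
  "max_degree G = Max (degree G ` verts G)"

definition matching_book_embedding ::
  "'a graph \<Rightarrow> nat \<Rightarrow> ('a \<Rightarrow> nat) \<Rightarrow> ('a set \<Rightarrow> nat) \<Rightarrow> bool" where
  "matching_book_embedding G k pos pg \<longleftrightarrow>
     inj_on pos (verts G) \<and>
     (\<forall>e \<in> edges G. pg e < k) \<and>
     (\<forall>e \<in> edges G. \<forall>e' \<in> edges G. \<forall>u v x y.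
        pg e = pg e' \<and> e = {u, v} \<and> e' = {x, y} \<longrightarrow>
        \<not> (pos u < pos x \<and> pos x < pos v \<and> pos v < pos y)) \<and>
     (\<forall>e \<in> edges G. \<forall>e' \<in> edges G. e \<noteq> e' \<and> pg e = pg e' \<longrightarrow> e \<inter> e' = {})"

definition mbt :: "'a graph \<Rightarrow> nat" where
  "mbt G = (LEAST k. \<exists>pos pg. matching_book_embedding G k pos pg)"

definition complete_graph :: "nat \<Rightarrow> nat graph" where
  "complete_graph r = ({0..<r}, {{i, j} | i j. i < r \<and> j < r \<and> i \<noteq> j})"

definition cycle_graph :: "nat \<Rightarrow> nat graph" where
  "cycle_graph s = ({0..<s}, {{i, (i + 1) mod s} | i. i < s})"

definition cart_prod :: "'a graph \<Rightarrow> 'b graph \<Rightarrow> ('a \<times> 'b) graph" (infixr "\<box>" 80) where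
  "cart_prod G B = (verts G \<times> verts B,
     {{(u1, v), (u2, v)} | u1 u2 v. {u1, u2} \<in> edges G \<and> v \<in> verts B} \<union>
     {{(u, v1), (u, v2)} | u v1 v2. u \<in> verts G \<and> {v1, v2} \<in> edges B})"

end

(*
  The pages at a vertex are pairwise distinct, so in a matching book embedding of
  a graph with k pages and all degrees at least k every page is a perfect matching.  As edges of
  one page do not cross, the vertices strictly between the two ends of an edge are then matched
  among themselves, so adjacent vertices have spine ranks of different parity: the graph is
  bipartite.  K_r with r >= 3 contains a triangle, so K_r x C_2m, which is (r+1)-regular, needs
  at least r + 2 pages.

  The layers (copies of K_r) are placed consecutively on the spine, alternately
  left to right and right to left.  Inside a layer an edge goes to page (sum of its positions)
  mod r; two crossing chords within a window of length r have position sums differing by less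
  than r, so these r pages are matchings of parallel chords.  The cycle edges between layers i
  and i+1 all have the same position sum, hence are nested, and go to page r + i mod 2; the
  edges from layer 2m-1 back to layer 0 enclose everything and join the odd steps on page r + 1.
*)

theory Submission
  imports Defs
begin

definition simple_graph :: "'a graph \<Rightarrow> bool" where
  "simple_graph G \<longleftrightarrow> finite (verts G) \<and> (\<forall>e\<in>edges G. e \<subseteq> verts G \<and> card e = 2)"

definition spine_rank :: "'a graph \<Rightarrow> ('a \<Rightarrow> nat) \<Rightarrow> 'a \<Rightarrow> nat" where
  "spine_rank G pos x = card {w \<in> verts G. pos w < pos x}"

lemma simple_graph_edgeE:
  assumes G: "simple_graph G" and e: "e \<in> edges G" "x \<in> e"
  obtains y where "e = {x, y}" "y \<noteq> x" "x \<in> verts G" "y \<in> verts G"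
proof -
  have sub: "e \<subseteq> verts G" and "card e = 2"
    using G e(1) unfolding simple_graph_def by auto
  then obtain p q where pq: "e = {p, q}" "p \<noteq> q"
    by (meson card_2_iff)
  from e(2) pq consider "x = p" | "x = q"
    by blast
  then show ?thesis
  proof cases
    case 1
    with pq sub that show ?thesis by blast
  next
    case 2
    with pq sub that show ?thesis by (metis insert_commute insert_subset)
  qed
qed

lemma simple_graph_finite_edges: "simple_graph G \<Longrightarrow> finite (edges G)"
  unfolding simple_graph_def by (meson Union_least finite_UnionD finite_subset)

lemma mbe_inj: "matching_book_embedding G k pos pg \<Longrightarrow> inj_on pos (verts G)"
  unfolding matching_book_embedding_def by blast

lemma mbe_page_less: "matching_book_embedding G k pos pg \<Longrightarrow> e \<in> edges G \<Longrightarrow> pg e < k"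
  unfolding matching_book_embedding_def by (elim conjE) simp

lemma mbe_no_crossing:
  assumes "matching_book_embedding G k pos pg" "e \<in> edges G" "e' \<in> edges G" "pg e = pg e'"
    and "e = {u, v}" "e' = {x, y}"
  shows "\<not> (pos u < pos x \<and> pos x < pos v \<and> pos v < pos y)"
proof -
  have "\<forall>e\<in>edges G. \<forall>e'\<in>edges G. \<forall>u v x y. pg e = pg e' \<and> e = {u, v} \<and> e' = {x, y} \<longrightarrow>
        \<not> (pos u < pos x \<and> pos x < pos v \<and> pos v < pos y)"
    using assms(1) unfolding matching_book_embedding_def by (elim conjE)
  with assms(2-) show ?thesis
    by simp
qed

lemma mbe_page_matching:
  assumes "matching_book_embedding G k pos pg" "e \<in> edges G" "e' \<in> edges G" "e \<noteq> e'" "pg e = pg e'"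
  shows "e \<inter> e' = {}"
  using assms unfolding matching_book_embedding_def by (elim conjE) simp

lemma mbe_page_at_full_vertex:
  assumes mbe: "matching_book_embedding G k pos pg" and full: "k \<le> degree G x" and "p < k"
  obtains e where "e \<in> edges G" "x \<in> e" "pg e = p"
proof -
  let ?I = "{e \<in> edges G. x \<in> e}"
  have inj: "inj_on pg ?I"
  proof (rule inj_onI)
    fix e e' assume "e \<in> ?I" "e' \<in> ?I" "pg e = pg e'"
    then show "e = e'"
      using mbe_page_matching[OF mbe, of e e'] by blast
  qed
  have sub: "pg ` ?I \<subseteq> {..<k}"
    using mbe_page_less[OF mbe] by auto
  have "card (pg ` ?I) = degree G x"
    unfolding degree_def by (rule card_image[OF inj])
  moreover have "card (pg ` ?I) \<le> card {..<k}"
    using card_mono[OF finite_lessThan sub] .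
  ultimately have "card (pg ` ?I) = card {..<k}"
    using full by (simp only: card_lessThan)
  then have "pg ` ?I = {..<k}"
    by (rule card_subset_eq[OF finite_lessThan sub])
  then have "p \<in> pg ` ?I"
    using \<open>p < k\<close> by simp
  then show ?thesis
    using that by blast
qed

lemma even_card_Union_doubletons:
  assumes disj: "pairwise disjnt F" and two: "\<And>e. e \<in> F \<Longrightarrow> card e = 2"
  shows "even (card (\<Union>F))"
proof -
  have "card (\<Union>F) = sum card F"
    using card_Union_disjoint[OF disj] two by (metis card.infinite zero_neq_numeral)
  also have "\<dots> = 2 * card F"
    using two by simp
  finally show ?thesis by simp
qed

lemma mbe_page_edge_inside:
  assumes G: "simple_graph G" and mbe: "matching_book_embedding G k pos pg"
    and ab: "{a, b} \<in> edges G" and yz: "{y, z} \<in> edges G" and page: "pg {y, z} = pg {a, b}"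
    and y: "pos a < pos y" "pos y < pos b"
  shows "pos a < pos z \<and> pos z < pos b"
proof -
  have "a \<in> verts G" "b \<in> verts G" "z \<in> verts G"
    using G ab yz unfolding simple_graph_def by auto
  have "{y, z} \<noteq> {a, b}"
    using y by (auto simp: doubleton_eq_iff)
  then have "{y, z} \<inter> {a, b} = {}"
    using mbe_page_matching[OF mbe yz ab _ page] by blast
  then have "pos z \<noteq> pos a" "pos z \<noteq> pos b"
    using mbe_inj[OF mbe] \<open>a \<in> verts G\<close> \<open>b \<in> verts G\<close> \<open>z \<in> verts G\<close> by (auto dest: inj_onD)
  moreover have "\<not> (pos z < pos a \<and> pos a < pos y \<and> pos y < pos b)"
    using mbe_no_crossing[OF mbe yz ab page, of z y a b] by (simp add: insert_commute)
  moreover have "\<not> (pos a < pos y \<and> pos y < pos b \<and> pos b < pos z)"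
    using mbe_no_crossing[OF mbe ab yz page[symmetric], of a b y z] by simp
  ultimately show ?thesis
    using y by linarith
qed

lemma spine_rank_split:
  assumes fin: "finite (verts G)" and inj: "inj_on pos (verts G)"
    and ab: "a \<in> verts G" "b \<in> verts G" "pos a < pos b"
  shows "spine_rank G pos b = spine_rank G pos a + card {y \<in> verts G. pos a < pos y \<and> pos y < pos b} + 1"
proof -
  let ?S = "{y \<in> verts G. pos a < pos y \<and> pos y < pos b}"
  have "{w \<in> verts G. pos w < pos b} = {w \<in> verts G. pos w < pos a} \<union> insert a ?S"
  proof (intro equalityI subsetI)
    fix w assume w: "w \<in> {w \<in> verts G. pos w < pos b}"
    have "pos w = pos a \<Longrightarrow> w = a"
      using w ab inj_onD[OF inj] by blast
    with w show "w \<in> {w \<in> verts G. pos w < pos a} \<union> insert a ?S"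
      by fastforce
  qed (use ab in auto)
  moreover have "card (\<dots>) = spine_rank G pos a + card ?S + 1"
    using fin unfolding spine_rank_def by (subst card_Un_disjoint) auto
  ultimately show ?thesis
    unfolding spine_rank_def by simp
qed

lemma mbe_rank_parity_of_perfect_page:
  assumes G: "simple_graph G" and mbe: "matching_book_embedding G k pos pg"
    and ab: "{a, b} \<in> edges G" "pos a < pos b"
    and perfect: "\<And>y. y \<in> verts G \<Longrightarrow> \<exists>e\<in>edges G. y \<in> e \<and> pg e = pg {a, b}"
  shows "odd (spine_rank G pos a + spine_rank G pos b)"
proof -
  define S where "S = {y \<in> verts G. pos a < pos y \<and> pos y < pos b}"
  define F where "F = {e \<in> edges G. pg e = pg {a, b} \<and> e \<subseteq> S}"
  have "S \<subseteq> \<Union>F"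
  proof
    fix y assume y: "y \<in> S"
    then obtain e where e: "e \<in> edges G" "y \<in> e" "pg e = pg {a, b}"
      using perfect unfolding S_def by blast
    then obtain z where z: "e = {y, z}" "y \<in> verts G" "z \<in> verts G"
      using simple_graph_edgeE[OF G] by metis
    have "pos a < pos z \<and> pos z < pos b"
      using mbe_page_edge_inside[OF G mbe ab(1)] e z y unfolding S_def by blast
    then have "e \<in> F"
      using e z y unfolding F_def S_def by auto
    with e(2) show "y \<in> \<Union>F"
      by blast
  qed
  then have "\<Union>F = S"
    unfolding F_def by blast
  moreover have "pairwise disjnt F"
    unfolding pairwise_def disjnt_def F_def using mbe_page_matching[OF mbe] by auto
  moreover have "card e = 2" if "e \<in> F" for e
    using G that unfolding F_def simple_graph_def by auto
  ultimately have "even (card S)"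
    using even_card_Union_doubletons by metis
  have "finite (verts G)" "a \<in> verts G" "b \<in> verts G"
    using G ab(1) unfolding simple_graph_def by auto
  then have "spine_rank G pos b = spine_rank G pos a + card S + 1"
    unfolding S_def using spine_rank_split[OF _ mbe_inj[OF mbe] _ _ ab(2)] by blast
  with \<open>even (card S)\<close> show ?thesis
    by simp
qed

lemma mbe_regular_rank_parity:
  assumes G: "simple_graph G" and mbe: "matching_book_embedding G k pos pg"
    and regular: "\<And>x. x \<in> verts G \<Longrightarrow> k \<le> degree G x"
    and ab: "{a, b} \<in> edges G"
  shows "odd (spine_rank G pos a + spine_rank G pos b)"
proof -
  have perfect: "\<exists>e'\<in>edges G. y \<in> e' \<and> pg e' = pg e"
    if "y \<in> verts G" "e \<in> edges G" for y e
    using mbe_page_at_full_vertex[OF mbe regular[OF \<open>y \<in> verts G\<close>]]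
      mbe_page_less[OF mbe \<open>e \<in> edges G\<close>]
    by metis
  have "a \<noteq> b" "a \<in> verts G" "b \<in> verts G"
    using G ab unfolding simple_graph_def by auto
  then have "pos a \<noteq> pos b"
    using inj_onD[OF mbe_inj[OF mbe]] by blast
  then consider "pos a < pos b" | "pos b < pos a"
    by linarith
  then show ?thesis
  proof cases
    case 1
    then show ?thesis
      using mbe_rank_parity_of_perfect_page[OF G mbe ab] perfect ab by blast
  next
    case 2
    have "{b, a} \<in> edges G"
      using ab by (simp add: insert_commute)
    then have "odd (spine_rank G pos b + spine_rank G pos a)"
      using mbe_rank_parity_of_perfect_page[OF G mbe _ 2] perfect by blast
    then show ?thesis
      by (simp add: add.commute)
  qed
qed

lemma mbe_regular_triangle_free:
  assumes "simple_graph G" "matching_book_embedding G k pos pg"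
    and "\<And>x. x \<in> verts G \<Longrightarrow> k \<le> degree G x"
    and "{a, b} \<in> edges G" "{b, c} \<in> edges G" "{a, c} \<in> edges G"
  shows False
  using mbe_regular_rank_parity[OF assms(1-3) assms(4)] mbe_regular_rank_parity[OF assms(1-3) assms(5)]
    mbe_regular_rank_parity[OF assms(1-3) assms(6)]
  by presburger

lemma simple_graph_cart_prod:
  assumes G: "simple_graph G" and B: "simple_graph B"
  shows "simple_graph (G \<box> B)"
proof -
  have "e \<subseteq> verts (G \<box> B) \<and> card e = 2" if "e \<in> edges (G \<box> B)" for e
  proof -
    from that consider u1 u2 v where "e = {(u1, v), (u2, v)}" "{u1, u2} \<in> edges G" "v \<in> verts B"
      | u v1 v2 where "e = {(u, v1), (u, v2)}" "u \<in> verts G" "{v1, v2} \<in> edges B"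
      unfolding cart_prod_def edges_def by auto
    then show ?thesis
    proof cases
      case 1
      then have "u1 \<noteq> u2" "u1 \<in> verts G" "u2 \<in> verts G"
        using G unfolding simple_graph_def by auto
      with 1 show ?thesis
        by (auto simp: cart_prod_def verts_def)
    next
      case 2
      then have "v1 \<noteq> v2" "v1 \<in> verts B" "v2 \<in> verts B"
        using B unfolding simple_graph_def by auto
      with 2 show ?thesis
        by (auto simp: cart_prod_def verts_def)
    qed
  qed
  moreover have "finite (verts (G \<box> B))"
    using G B unfolding simple_graph_def cart_prod_def verts_def by simp
  ultimately show ?thesis
    unfolding simple_graph_def by blast
qed

lemma incident_edges_cart_prod:
  assumes G: "simple_graph G" and B: "simple_graph B" and u: "u \<in> verts G" and v: "v \<in> verts B"
  shows "{e \<in> edges (G \<box> B). (u, v) \<in> e} =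
    image (\<lambda>x. (x, v)) ` {e \<in> edges G. u \<in> e} \<union> image (Pair u) ` {e \<in> edges B. v \<in> e}"
  (is "?L = ?R")
proof (intro equalityI subsetI)
  fix e assume "e \<in> ?L"
  then have "(u, v) \<in> e" and "e \<in> edges (G \<box> B)"
    by auto
  then consider u1 u2 where "e = {(u1, v), (u2, v)}" "{u1, u2} \<in> edges G" "u \<in> {u1, u2}"
    | v1 v2 where "e = {(u, v1), (u, v2)}" "{v1, v2} \<in> edges B" "v \<in> {v1, v2}"
    unfolding cart_prod_def edges_def by auto
  then show "e \<in> ?R"
  proof cases
    case 1
    then have "e = (\<lambda>x. (x, v)) ` {u1, u2}"
      by auto
    with 1 show ?thesis
      by blast
  next
    case 2
    then have "e = Pair u ` {v1, v2}"
      by auto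
    with 2 show ?thesis
      by blast
  qed
next
  fix e assume "e \<in> ?R"
  then consider f where "e = (\<lambda>x. (x, v)) ` f" "f \<in> edges G" "u \<in> f"
    | f where "e = Pair u ` f" "f \<in> edges B" "v \<in> f"
    by auto
  then show "e \<in> ?L"
  proof cases
    case 1
    then obtain y where "f = {u, y}"
      using simple_graph_edgeE[OF G] by metis
    with 1 v show ?thesis
      unfolding cart_prod_def edges_def verts_def by auto
  next
    case 2
    then obtain y where "f = {v, y}"
      using simple_graph_edgeE[OF B] by metis
    with 2 u show ?thesis
      unfolding cart_prod_def edges_def verts_def by auto
  qed
qed

lemma degree_cart_prod:
  assumes G: "simple_graph G" and B: "simple_graph B" and u: "u \<in> verts G" and v: "v \<in> verts B"
  shows "degree (G \<box> B) (u, v) = degree G u + degree B v"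
proof -
  let ?IG = "{e \<in> edges G. u \<in> e}" and ?IB = "{e \<in> edges B. v \<in> e}"
  have disjoint: "image (\<lambda>x. (x, v)) ` ?IG \<inter> image (Pair u) ` ?IB = {}"
  proof (rule ccontr)
    assume "\<not> ?thesis"
    then obtain f g where f: "f \<in> ?IG" and eq: "(\<lambda>x. (x, v)) ` f = Pair u ` g"
      by blast
    obtain y where "f = {u, y}" "y \<noteq> u"
      using simple_graph_edgeE[OF G] f by blast
    moreover from this have "(y, v) \<in> Pair u ` g"
      using eq by blast
    ultimately show False
      by blast
  qed
  have "inj_on (image (\<lambda>x. (x, v))) ?IG" "inj_on (image (Pair u)) ?IB"
    by (auto intro!: inj_on_image inj_onI)
  moreover have "finite ?IG" "finite ?IB"
    using simple_graph_finite_edges[OF G] simple_graph_finite_edges[OF B] by auto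
  ultimately show ?thesis
    unfolding degree_def incident_edges_cart_prod[OF assms]
    by (simp add: card_Un_disjoint disjoint card_image)
qed

lemma simple_graph_complete_graph: "simple_graph (complete_graph r)"
  unfolding simple_graph_def complete_graph_def verts_def edges_def by force

lemma degree_complete_graph:
  assumes "i < r"
  shows "degree (complete_graph r) i = r - 1"
proof -
  have incident: "{e \<in> edges (complete_graph r). i \<in> e} = (\<lambda>j. {i, j}) ` ({0..<r} - {i})"
  proof (intro equalityI subsetI)
    fix e assume e: "e \<in> {e \<in> edges (complete_graph r). i \<in> e}"
    then obtain a b where ab: "e = {a, b}" "a < r" "b < r" "a \<noteq> b"
      unfolding complete_graph_def edges_def by auto
    from e ab consider "i = a" | "i = b"
      by blast
    then show "e \<in> (\<lambda>j. {i, j}) ` ({0..<r} - {i})"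
    proof cases
      case 1
      with ab have "e = {i, b}" "b \<in> {0..<r} - {i}"
        by auto
      then show ?thesis by blast
    next
      case 2
      with ab have "e = {i, a}" "a \<in> {0..<r} - {i}"
        by auto
      then show ?thesis by blast
    qed
  next
    fix e assume "e \<in> (\<lambda>j. {i, j}) ` ({0..<r} - {i})"
    then obtain j where "e = {i, j}" "j \<in> {0..<r} - {i}"
      by (rule imageE)
    with assms show "e \<in> {e \<in> edges (complete_graph r). i \<in> e}"
      unfolding complete_graph_def edges_def by fastforce
  qed
  have "inj_on (\<lambda>j. {i, j}) ({0..<r} - {i})"
    by (auto intro!: inj_onI simp: doubleton_eq_iff)
  then have "card ((\<lambda>j. {i, j}) ` ({0..<r} - {i})) = r - 1"
    using assms by (simp add: card_image)
  then show ?thesis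
    unfolding degree_def incident .
qed

lemma simple_graph_cycle_graph:
  assumes "2 \<le> s"
  shows "simple_graph (cycle_graph s)"
  unfolding simple_graph_def cycle_graph_def verts_def edges_def
  using assms by (auto simp: mod_Suc)

lemma degree_cycle_graph:
  assumes s: "3 \<le> s" and i: "i < s"
  shows "degree (cycle_graph s) i = 2"
proof -
  define j where "j = (if i = 0 then s - 1 else i - 1)"
  have j: "j < s" "(j + 1) mod s = i"
    using s i unfolding j_def by auto
  have succ_inj: "k = j" if "k < s" "(k + 1) mod s = i" for k
    using that j by (simp add: mod_Suc split: if_splits)
  have incident: "{e \<in> edges (cycle_graph s). i \<in> e} = {{i, (i + 1) mod s}, {j, (j + 1) mod s}}"
  proof (intro equalityI subsetI)
    fix e assume e: "e \<in> {e \<in> edges (cycle_graph s). i \<in> e}"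
    then obtain k where k: "k < s" "e = {k, (k + 1) mod s}"
      unfolding cycle_graph_def edges_def by auto
    with e have "i = k \<or> i = (k + 1) mod s"
      by auto
    with k succ_inj show "e \<in> {{i, (i + 1) mod s}, {j, (j + 1) mod s}}"
      by auto
  qed (use i j in \<open>auto simp: cycle_graph_def edges_def\<close>)
  have "{i, (i + 1) mod s} \<noteq> {j, (j + 1) mod s}"
    using s i unfolding j_def by (auto simp: doubleton_eq_iff mod_Suc)
  then show ?thesis
    unfolding degree_def incident by simp
qed

lemma max_degree_regular:
  assumes "verts G \<noteq> {}" and "\<And>x. x \<in> verts G \<Longrightarrow> degree G x = d"
  shows "max_degree G = d"
proof -
  have "degree G ` verts G = {d}"
    using assms by auto
  then show ?thesis
    unfolding max_degree_def by simp
qed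

lemma nat_mod_eq_in_window:
  fixes a b r :: nat
  assumes "a mod r = b mod r" "a \<le> b" "b < a + r"
  shows "a = b"
proof -
  obtain s where "b = a + r * s"
    using mod_eq_nat2E[OF assms(1,2)] .
  with assms(3) show ?thesis
    by (cases s) auto
qed

lemma block_index_less:
  fixes i j r w x :: nat
  assumes "i * r \<le> x" "x < j * r + w * r"
  shows "i < j + w"
proof (rule ccontr)
  assume "\<not> i < j + w"
  then have "j * r + w * r \<le> i * r"
    by (metis add_mult_distrib mult_le_mono1 not_less)
  with assms show False
    by linarith
qed

lemma block_index_unique:
  fixes i j r x :: nat
  assumes "i * r \<le> x" "x < i * r + r" "j * r \<le> x" "x < j * r + r"
  shows "i = j"
  using block_index_less[of i r x j 1] block_index_less[of j r x i 1] assms by simp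

lemma double_block_index_unique:
  fixes i j r x :: nat
  assumes "i * r \<le> x" "x < i * r + 2 * r" "j * r \<le> x" "x < j * r + 2 * r" "i mod 2 = j mod 2"
  shows "i = j"
  using block_index_less[of i r x j 2] block_index_less[of j r x i 2] assms by presburger

locale complete_times_even_cycle =
  fixes r m :: nat
  assumes two_le_m: "2 \<le> m"
begin

abbreviation KC :: "(nat \<times> nat) graph" where
  "KC \<equiv> complete_graph r \<box> cycle_graph (2 * m)"

lemma verts_KC: "verts KC = {0..<r} \<times> {0..<2 * m}"
  by (simp add: cart_prod_def verts_def complete_graph_def cycle_graph_def)

lemma edges_KC_cases:
  assumes "e \<in> edges KC"
  obtains (layer) a b v where "a < r" "b < r" "a \<noteq> b" "v < 2 * m" "e = {(a, v), (b, v)}"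
    | (cycle) u i where "u < r" "i < 2 * m" "e = {(u, i), (u, (i + 1) mod (2 * m))}"
  using assms unfolding cart_prod_def edges_def verts_def complete_graph_def cycle_graph_def
  by (auto simp: doubleton_eq_iff)

definition pos :: "nat \<times> nat \<Rightarrow> nat" where
  "pos x = snd x * r + (if even (snd x) then fst x else r - 1 - fst x)"

definition page :: "(nat \<times> nat) set \<Rightarrow> nat" where
  "page e = (if card (snd ` e) = 1 then (\<Sum>x\<in>e. pos x) mod r
     else if snd ` e = {0, 2 * m - 1} then r + 1
     else r + Min (snd ` e) mod 2)"

lemma pos_in_block: "u < r \<Longrightarrow> v * r \<le> pos (u, v) \<and> pos (u, v) < v * r + r"
  by (auto simp: pos_def)

lemma edge_geometry:
  assumes "e \<in> edges KC" "e = {p, q}"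
  obtains (layer) v where "v * r \<le> pos p" "pos p < v * r + r" "v * r \<le> pos q" "pos q < v * r + r"
      "page e = (pos p + pos q) mod r" "page e < r"
    | (step) i where "i + 1 < 2 * m" "i * r \<le> pos p" "pos p < i * r + 2 * r"
      "i * r \<le> pos q" "pos q < i * r + 2 * r" "pos p + pos q + 1 = 2 * (i * r) + 2 * r"
      "page e = r + i mod 2"
    | (wrap) "pos p < r \<or> (2 * m - 1) * r \<le> pos p" "pos q < r \<or> (2 * m - 1) * r \<le> pos q"
      "pos p + pos q + 1 = 2 * m * r" "page e = r + 1"
  using assms(1)
proof (cases rule: edges_KC_cases)
  case (layer a b v)
  with assms(2) have "p \<in> {(a, v), (b, v)}" "q \<in> {(a, v), (b, v)}"
    "pos p + pos q = pos (a, v) + pos (b, v)"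
    by (auto simp: doubleton_eq_iff)
  moreover have "page e = (pos (a, v) + pos (b, v)) mod r" "page e < r"
    using layer by (simp_all add: page_def)
  ultimately show ?thesis
    using that(1)[of v] pos_in_block[OF \<open>a < r\<close>, of v] pos_in_block[OF \<open>b < r\<close>, of v]
    by auto
next
  case (cycle u i)
  show ?thesis
  proof (cases "i + 1 < 2 * m")
    case True
    have "snd ` e = {i, i + 1}" "{i, i + 1} \<noteq> {0, 2 * m - 1}"
      using cycle True two_le_m by (auto simp: doubleton_eq_iff)
    then have "page e = r + i mod 2"
      by (simp add: page_def)
    moreover have "pos (u, i) + pos (u, i + 1) + 1 = 2 * (i * r) + 2 * r"
      using \<open>u < r\<close> by (auto simp: pos_def)
    ultimately show ?thesis
      using that(2)[of i] True pos_in_block[OF \<open>u < r\<close>, of i] pos_in_block[OF \<open>u < r\<close>, of "i + 1"]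
        cycle assms(2)
      by (auto simp: doubleton_eq_iff)
  next
    case False
    then have i: "i = 2 * m - 1" "odd i"
      using cycle two_le_m by auto
    then have "snd ` e = {0, 2 * m - 1}"
      using cycle two_le_m by auto
    then have "page e = r + 1"
      using two_le_m by (simp add: page_def)
    moreover have "(2 * m - 1) * r + r = 2 * m * r"
      using two_le_m by (cases m) auto
    with \<open>u < r\<close> i have "pos (u, 0) < r" "(2 * m - 1) * r \<le> pos (u, i)"
      "pos (u, 0) + pos (u, i) + 1 = 2 * m * r"
      by (auto simp: pos_def)
    ultimately show ?thesis
      using that(3) cycle assms(2) i by (auto simp: doubleton_eq_iff)
  qed
qed

lemma simple_graph_KC: "simple_graph KC"
  using two_le_m
  by (intro simple_graph_cart_prod simple_graph_complete_graph simple_graph_cycle_graph) simp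

lemma inj_on_pos: "inj_on pos (verts KC)"
proof (rule inj_onI)
  fix x y assume "x \<in> verts KC" "y \<in> verts KC" and eq: "pos x = pos y"
  then obtain u v u' v' where x: "x = (u, v)" "u < r" and y: "y = (u', v')" "u' < r"
    unfolding verts_KC by auto
  have "v = v'"
    using block_index_unique[of v r "pos x" v'] pos_in_block[OF x(2), of v] pos_in_block[OF y(2), of v']
      x y eq by simp
  with eq x y show "x = y"
    by (auto simp: pos_def split: if_splits)
qed

lemma odd_step_window:
  assumes "i + 1 < 2 * m" "odd i"
  shows "r \<le> i * r" "i * r + 2 * r \<le> (2 * m - 1) * r"
proof -
  have "1 \<le> i" "i + 2 \<le> 2 * m - 1"
    using assms by presburger+
  then show "r \<le> i * r" "i * r + 2 * r \<le> (2 * m - 1) * r"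
    by (metis mult_1 mult_le_mono1, metis add_mult_distrib mult_le_mono1)
qed

lemma page_less:
  assumes "e \<in> edges KC"
  shows "page e < r + 2"
proof -
  obtain p q where "e = {p, q}"
    using assms by (cases rule: edges_KC_cases) auto
  with assms show ?thesis
  proof (cases rule: edge_geometry)
    case layer
    then show ?thesis
      by linarith
  qed simp_all
qed

lemma layout_no_crossing:
  assumes e: "e \<in> edges KC" "e = {p, q}" and e': "e' \<in> edges KC" "e' = {x, y}"
    and same_page: "page e = page e'"
    and cross: "pos p < pos x" "pos x < pos q" "pos q < pos y"
  shows False
  using e
proof (cases rule: edge_geometry)
  case (layer v)
  note L = this
  from e' show False
  proof (cases rule: edge_geometry)
    case (layer v')
    have "v' = v"
      using block_index_unique[of v' r "pos x" v] L layer cross by simp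
    then have "pos x + pos y < pos p + pos q + r"
      using L layer cross by simp
    then have "pos p + pos q = pos x + pos y"
      using nat_mod_eq_in_window[of "pos p + pos q" r "pos x + pos y"] L(5) layer(5) same_page cross
      by simp
    with cross show False
      by simp
  qed (use L same_page in simp_all)
next
  case (step i)
  note S = this
  from e' show False
  proof (cases rule: edge_geometry)
    case (step i')
    then have "i' = i"
      using double_block_index_unique[of i' r "pos x" i] S cross same_page by simp
    with S step cross show False
      by simp
  next
    case wrap
    then have "odd i"
      using S(7) same_page by (simp add: odd_iff_mod_2_eq_one)
    then have "r \<le> pos x" "pos x < (2 * m - 1) * r"
      using odd_step_window[OF S(1)] S cross by linarith+
    with wrap(1) show False
      by linarith
  qed (use S same_page in simp_all)
next
  case wrap
  note W = this
  from e' show False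
  proof (cases rule: edge_geometry)
    case (step i')
    then have "odd i'"
      using W(4) same_page by (simp add: odd_iff_mod_2_eq_one)
    then have "r \<le> pos q" "pos q < (2 * m - 1) * r"
      using odd_step_window[OF step(1)] step cross by linarith+
    with W(2) show False
      by linarith
  next
    case wrap
    with W cross show False
      by simp
  qed (use W same_page in simp_all)
qed

lemma same_page_neighbour_unique:
  assumes e: "{z, w} \<in> edges KC" and e': "{z, w'} \<in> edges KC"
    and same_page: "page {z, w} = page {z, w'}"
  shows "pos w = pos w'"
  using e refl
proof (cases rule: edge_geometry)
  case (layer v)
  note L = this
  from e' refl show ?thesis
  proof (cases rule: edge_geometry)
    case (layer v')
    have "v' = v"
      using block_index_unique[of v' r "pos z" v] L layer by simp
    then show ?thesis
      using nat_mod_eq_in_window[of "pos z + pos w" r "pos z + pos w'"]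
        nat_mod_eq_in_window[of "pos z + pos w'" r "pos z + pos w"] L layer same_page
      by (cases "pos w \<le> pos w'") auto
  qed (use L same_page in simp_all)
next
  case (step i)
  note S = this
  from e' refl show ?thesis
  proof (cases rule: edge_geometry)
    case (step i')
    then have "i' = i"
      using double_block_index_unique[of i' r "pos z" i] S same_page by simp
    with S step show ?thesis
      by simp
  next
    case wrap
    then have "odd i"
      using S(7) same_page by (simp add: odd_iff_mod_2_eq_one)
    then have "r \<le> pos z" "pos z < (2 * m - 1) * r"
      using odd_step_window[OF S(1)] S by linarith+
    with wrap(1) show ?thesis
      by linarith
  qed (use S same_page in simp_all)
next
  case wrap
  note W = this
  from e' refl show ?thesis
  proof (cases rule: edge_geometry)
    case (step i')
    then have "odd i'"
      using W(4) same_page by (simp add: odd_iff_mod_2_eq_one)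
    then have "r \<le> pos z" "pos z < (2 * m - 1) * r"
      using odd_step_window[OF step(1)] step by linarith+
    with W(1) show ?thesis
      by linarith
  next
    case wrap
    with W show ?thesis
      by simp
  qed (use W same_page in simp_all)
qed

theorem layout_matching_book_embedding: "matching_book_embedding KC (r + 2) pos page"
  unfolding matching_book_embedding_def
proof (intro conjI ballI allI impI)
  show "inj_on pos (verts KC)"
    by (rule inj_on_pos)
next
  fix e assume "e \<in> edges KC"
  then show "page e < r + 2"
    by (rule page_less)
next
  fix e e' p q x y
  assume e: "e \<in> edges KC" and e': "e' \<in> edges KC"
    and h: "page e = page e' \<and> e = {p, q} \<and> e' = {x, y}"
  show "\<not> (pos p < pos x \<and> pos x < pos q \<and> pos q < pos y)"
  proof (intro notI, elim conjE)
    assume cross: "pos p < pos x" "pos x < pos q" "pos q < pos y"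
    from h show False
      by (elim conjE) (rule layout_no_crossing[OF e _ e' _ _ cross])
  qed
next
  fix e e' assume e: "e \<in> edges KC" and e': "e' \<in> edges KC" and h: "e \<noteq> e' \<and> page e = page e'"
  then have "e \<noteq> e'" "page e = page e'"
    by simp_all
  show "e \<inter> e' = {}"
  proof (rule ccontr)
    assume "e \<inter> e' \<noteq> {}"
    then obtain z where "z \<in> e" "z \<in> e'"
      by blast
    obtain w where w: "e = {z, w}" "w \<in> verts KC"
      using simple_graph_edgeE[OF simple_graph_KC e \<open>z \<in> e\<close>] by blast
    obtain w' where w': "e' = {z, w'}" "w' \<in> verts KC"
      using simple_graph_edgeE[OF simple_graph_KC e' \<open>z \<in> e'\<close>] by blast
    have "pos w = pos w'"
      using e e' \<open>page e = page e'\<close> unfolding w w' by (rule same_page_neighbour_unique)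
    then have "w = w'"
      using inj_onD[OF inj_on_pos] w w' by blast
    with w w' \<open>e \<noteq> e'\<close> show False
      by simp
  qed
qed

lemma degree_KC:
  assumes "x \<in> verts KC"
  shows "degree KC x = r + 1"
proof -
  obtain u v where x: "x = (u, v)" "u < r" "v < 2 * m"
    using assms unfolding verts_KC by auto
  moreover have "u \<in> verts (complete_graph r)" "v \<in> verts (cycle_graph (2 * m))"
    using x by (simp_all add: complete_graph_def cycle_graph_def verts_def)
  ultimately have "degree KC x = degree (complete_graph r) u + degree (cycle_graph (2 * m)) v"
    using degree_cart_prod[OF simple_graph_complete_graph simple_graph_cycle_graph] two_le_m
    by simp
  also have "\<dots> = r + 1"
    using x two_le_m by (simp add: degree_complete_graph degree_cycle_graph)
  finally show ?thesis .
qed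

lemma max_degree_KC:
  assumes "1 \<le> r"
  shows "max_degree KC = r + 1"
proof (rule max_degree_regular)
  show "verts KC \<noteq> {}"
    using assms two_le_m unfolding verts_KC by auto
qed (rule degree_KC)

lemma layer_edge_in_KC:
  assumes "a < r" "b < r" "a \<noteq> b" "v < 2 * m"
  shows "{(a, v), (b, v)} \<in> edges KC"
proof -
  have "{a, b} \<in> edges (complete_graph r)"
    using assms unfolding complete_graph_def edges_def by auto
  with assms(4) show ?thesis
    unfolding cart_prod_def edges_def verts_def cycle_graph_def by auto
qed

lemma matching_book_embedding_pages_ge:
  assumes "3 \<le> r" and mbe: "matching_book_embedding KC k pos' pg"
  shows "r + 2 \<le> k"
proof (rule ccontr)
  assume "\<not> r + 2 \<le> k"
  then have "k \<le> degree KC x" if "x \<in> verts KC" for x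
    using degree_KC[OF that] by simp
  moreover have "{(0, 0), (1, 0)} \<in> edges KC" "{(1, 0), (2, 0)} \<in> edges KC" "{(0, 0), (2, 0)} \<in> edges KC"
    using assms(1) two_le_m by (auto intro: layer_edge_in_KC)
  ultimately show False
    by (rule mbe_regular_triangle_free[OF simple_graph_KC mbe])
qed

lemma mbt_KC:
  assumes "3 \<le> r"
  shows "mbt KC = r + 2"
  unfolding mbt_def
proof (rule Least_equality)
  show "\<exists>pos pg. matching_book_embedding KC (r + 2) pos pg"
    using layout_matching_book_embedding by blast
qed (use matching_book_embedding_pages_ge[OF assms] in blast)

end

theorem lemma2p6:
  fixes n m :: nat
  assumes "n \<ge> 2" and "m \<ge> 2"
  shows "mbt (complete_graph (2*n) \<box> cycle_graph (2*m))
           = max_degree (complete_graph (2*n) \<box> cycle_graph (2*m)) + 1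
         \<and> max_degree (complete_graph (2*n) \<box> cycle_graph (2*m)) + 1 = 2*n + 2
         \<and> mbt (complete_graph (2*n+1) \<box> cycle_graph (2*m))
           = max_degree (complete_graph (2*n+1) \<box> cycle_graph (2*m)) + 1
         \<and> max_degree (complete_graph (2*n+1) \<box> cycle_graph (2*m)) + 1 = 2*n + 3"
proof -
  interpret complete_times_even_cycle "2 * n" m
    using assms by unfold_locales
  interpret odd: complete_times_even_cycle "2 * n + 1" m
    using assms by unfold_locales
  show ?thesis
    using assms mbt_KC max_degree_KC odd.mbt_KC odd.max_degree_KC by simp
qed

end
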